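(* In the Poisson-driven SDE setting, let $\psi:\mathcal K\times\mathcal N^\#_{\mathbb R\times\mathcal K}\to[0,\infty]$ be any measurable functional and $N_{\le0}$ any initial condition. If $N,N':\Omega\to\mathcal N^{\#g}_{\mathbb R\times\mathcal K}$ are two non-explosive marked point processes that both solve the Poisson-driven SDE with intensity functional $\psi$ and initial condition $N_{\le0}$, then $N=N'$ almost surely.
   Context: $\mathcal N^\#_{\mathcal Y}$ denotes the boundedly finite $\{0,1,\dots\}\cup\{\infty\}$-valued Borel measures on a complete separable metric space (CSMS) $\mathcal Y$ (Borel $\sigma$-algebra generated by $\xi\mapsto\xi(A)$); for a CSMS $\mathcal K$ with Borel measure $\ell$, $\mathcal N^{\#g}_{\mathbb R\times\mathcal K}$ is the set of $\xi\in\mathcal N^\#_{\mathbb R\times\mathcal K}$ whose ground measure $\xi(\cdot\times\mathcal K)$ is boundedly finite with mass $0$ or $1$ at each time. Non-explosive marked point processes are measurable maps into $\mathcal N^{\#g}_{\mathbb R\times\mathcal K}$. $\theta_t\xi(A)=\xi(A+t)$, $A+t=\{(s+t,u):(s,u)\in A\}$; $\xi|_I$ is the restriction to $I\times\mathcal K$; $\theta_t\xi^-=(\theta_t\xi)|_{(-\infty,0)}$. SDE setting: $N_{\le0}$ is a non-explosive marked point process on $(\Omega_{\le0},\mathcal F_{\le0},\mathbb P_{\le0})$ with no points in $(0,\infty)\times\mathcal K$; $M_{>0}$ is a Poisson process on $\mathbb R\times\mathcal K\times\mathbb R$ with mean measure $dt\,\ell(dm)\,dz$ on $(\Omega_{>0},\mathcal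 F_{>0},\mathbb P_{>0})$; $(\Omega,\mathcal F,\mathbb P)$ is the completion of the product probability space; $M(\omega):=M_{>0}(\omega_{>0})$ for $\omega=(\omega_{\le0},\omega_{>0})$; $\mathcal F_t$ is the $\mathbb P$-completion of $\mathcal F^{N_{\le0}}_t\otimes\mathcal F^{M_{>0}}_t$, where $\mathcal F^{P}_t$ denotes the internal history $\sigma\{P(A\times U):A\subset(-\infty,t]\}$. A solution of the Poisson-driven SDE is an $\mathbb F$-adapted non-explosive marked point process $N$ such that, almost surely, $N(A)=\iint_A\int_{(0,\lambda(\omega,t,m)]}M(\omega,dt,dm,dz)$ for all Borel $A\subset(0,\infty)\times\mathcal K$, with $\lambda(\omega,t,m)=\psi(m\mid\theta_tN(\omega)^-)$, and $N(\omega)|_{(-\infty,0]}=N_{\le0}(\omega_{\le0})$. *)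

theory Defs
  imports "HOL-Probability.Probability"
begin

definition bf_counting_measure :: "('a::metric_space) measure \<Rightarrow> bool" where
  "bf_counting_measure \<xi> \<longleftrightarrow> sets \<xi> = sets borel \<and>
     (\<forall>A\<in>sets borel. emeasure \<xi> A \<in> range (of_nat :: nat \<Rightarrow> ennreal) \<union> {\<infinity>}) \<and>
     (\<forall>A\<in>sets borel. bounded A \<longrightarrow> emeasure \<xi> A < \<infinity>)"

definition NS :: "('a::metric_space) measure measure" where
  "NS = sigma {\<xi>. bf_counting_measure \<xi>}
     {{\<xi>. bf_counting_measure \<xi> \<and> emeasure \<xi> A \<in> B} | A B.
        A \<in> sets borel \<and> B \<in> sets (borel :: ennreal measure)}"

definition ground_simple :: "(real \<times> 'k::metric_space) measure \<Rightarrow> bool" where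
  "ground_simple \<xi> \<longleftrightarrow> bf_counting_measure \<xi> \<and>
     (\<forall>I\<in>sets (borel :: real measure). bounded I \<longrightarrow> emeasure \<xi> (I \<times> UNIV) < \<infinity>) \<and>
     (\<forall>t. emeasure \<xi> ({t} \<times> UNIV) \<le> 1)"

definition nonexpl_mpp :: "'w measure \<Rightarrow> ('w \<Rightarrow> (real \<times> 'k::metric_space) measure) \<Rightarrow> bool" where
  "nonexpl_mpp P N \<longleftrightarrow> N \<in> measurable P NS \<and> (\<forall>\<omega>\<in>space P. ground_simple (N \<omega>))"

definition poisson_process ::
  "'w measure \<Rightarrow> ('w \<Rightarrow> ('a::metric_space) measure) \<Rightarrow> 'a measure \<Rightarrow> bool" where
  "poisson_process P M \<mu> \<longleftrightarrow> prob_space P \<and> M \<in> measurable P NS \<and>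
     (\<forall>A\<in>sets borel. emeasure \<mu> A < \<infinity> \<longrightarrow>
        (\<forall>k::nat. measure P {\<omega>\<in>space P. emeasure (M \<omega>) A = of_nat k} =
            exp (- enn2real (emeasure \<mu> A)) * enn2real (emeasure \<mu> A) ^ k / fact k)) \<and>
     (\<forall>(n::nat) A. (\<forall>i<n. A i \<in> sets borel) \<longrightarrow> disjoint_family_on A {..<n} \<longrightarrow>
        prob_space.indep_vars P (\<lambda>_. borel) (\<lambda>i \<omega>. emeasure (M \<omega>) (A i)) {..<n})"

definition shift :: "real \<Rightarrow> (real \<times> 'k::topological_space) measure \<Rightarrow> (real \<times> 'k) measure" where
  "shift t \<xi> = distr \<xi> borel (\<lambda>(s, u). (s - t, u))"

definition restr :: "(real \<times> 'k::topological_space) measure \<Rightarrow> real set \<Rightarrow> (real \<times> 'k) measure" where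
  "restr \<xi> I = density \<xi> (indicator (I \<times> UNIV))"

definition hist :: "'w measure \<Rightarrow> ('w \<Rightarrow> (real \<times> 'b::topological_space) measure) \<Rightarrow> real \<Rightarrow> 'w set set" where
  "hist P X t = sigma_sets (space P)
     {{\<omega>\<in>space P. emeasure (X \<omega>) A \<in> B} | A B.
        A \<in> sets borel \<and> A \<subseteq> {..t} \<times> UNIV \<and> B \<in> sets (borel :: ennreal measure)}"

definition augment :: "'w measure \<Rightarrow> 'w set set \<Rightarrow> 'w set set" where
  "augment P G = {A. A \<subseteq> space P \<and> (\<exists>B\<in>G. \<exists>Z\<in>null_sets P. (A - B) \<union> (B - A) \<subseteq> Z)}"

definition sde_filtration ::
  "'w0 measure \<Rightarrow> ('w0 \<Rightarrow> (real \<times> 'k::topological_space) measure) \<Rightarrow>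
   'w1 measure \<Rightarrow> ('w1 \<Rightarrow> (real \<times> ('k \<times> real)) measure) \<Rightarrow> real \<Rightarrow> ('w0 \<times> 'w1) set set" where
  "sde_filtration P0 N0 P1 M1 t =
     augment (completion (P0 \<Otimes>\<^sub>M P1))
       (sets (sigma (space P0) (hist P0 N0 t) \<Otimes>\<^sub>M sigma (space P1) (hist P1 M1 t)))"

definition sde_solution ::
  "'w0 measure \<Rightarrow> ('w0 \<Rightarrow> (real \<times> 'k::metric_space) measure) \<Rightarrow>
   'w1 measure \<Rightarrow> ('w1 \<Rightarrow> (real \<times> ('k \<times> real)) measure) \<Rightarrow>
   ('k \<Rightarrow> (real \<times> 'k) measure \<Rightarrow> ennreal) \<Rightarrow>
   ('w0 \<times> 'w1 \<Rightarrow> (real \<times> 'k) measure) \<Rightarrow> bool" where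
  "sde_solution P0 N0 P1 M1 \<psi> N \<longleftrightarrow>
     nonexpl_mpp (completion (P0 \<Otimes>\<^sub>M P1)) N \<and>
     (\<forall>t. \<forall>A\<in>sets borel. A \<subseteq> {..t} \<times> UNIV \<longrightarrow>
        (\<lambda>\<omega>. emeasure (N \<omega>) A) \<in> borel_measurable
           (sigma (space (completion (P0 \<Otimes>\<^sub>M P1))) (sde_filtration P0 N0 P1 M1 t))) \<and>
     (AE \<omega> in completion (P0 \<Otimes>\<^sub>M P1).
        (\<forall>A\<in>sets borel. A \<subseteq> {0<..} \<times> UNIV \<longrightarrow>
           emeasure (N \<omega>) A =
           emeasure (M1 (snd \<omega>))
             {(t, m, z). (t, m) \<in> A \<and> 0 < z \<and> ennreal z \<le> \<psi> m (restr (shift t (N \<omega>)) {..<0})}) \<and>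
        (\<forall>A\<in>sets borel. emeasure (N \<omega>) (A \<inter> ({..0} \<times> UNIV)) = emeasure (N0 (fst \<omega>)) A))"

end

theory Submission
  imports Defs
begin

text \<open>Uniqueness is pathwise: fix an outcome for which both solutions satisfy the thinning
  equation with the same Poisson realisation and the same initial condition. Both paths then
  agree on \<open>(-\<infinity>, 0]\<close>, and agreement before time \<open>T\<close> propagates: the intensities at times
  \<open>t \<le> T\<close> only see the past before \<open>t\<close>, so the thinning equation forces agreement up to \<open>T\<close>;
  since non-explosive paths have no points in some interval \<open>(T, T + \<delta>)\<close>, agreement extends
  beyond \<open>T\<close>, and by continuity it also holds at suprema. Real induction concludes.\<close>

lemma real_induct_upwards [case_names down base limit step]:
  fixes P :: "real \<Rightarrow> bool"
  assumes down: "\<And>S T. P T \<Longrightarrow> S \<le> T \<Longrightarrow> P S"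
    and base: "P a"
    and limit: "\<And>S. (\<And>T. T < S \<Longrightarrow> P T) \<Longrightarrow> P S"
    and step: "\<And>T. P T \<Longrightarrow> \<exists>\<delta>>0. P (T + \<delta>)"
  shows "P T"
proof (rule ccontr)
  assume "\<not> P T"
  define B where "B = {T. \<not> P T}"
  have "B \<noteq> {}" using \<open>\<not> P T\<close> by (auto simp: B_def)
  have "bdd_below B"
    using base down by (intro bdd_belowI[of _ a]) (metis B_def mem_Collect_eq nle_le)
  have below: "P S" if "S < Inf B" for S
    using that cInf_lower[OF _ \<open>bdd_below B\<close>, of S] by (force simp: B_def)
  obtain \<delta> where "\<delta> > 0" "P (Inf B + \<delta>)"
    using step[OF limit[OF below]] by blast
  then obtain b where "b \<in> B" "b < Inf B + \<delta>"
    using cInf_less_iff[OF \<open>B \<noteq> {}\<close> \<open>bdd_below B\<close>] by (meson less_add_same_cancel1)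
  with down[OF \<open>P (Inf B + \<delta>)\<close>, of b] show False by (simp add: B_def)
qed

definition agree_on :: "'a::topological_space measure \<Rightarrow> 'a measure \<Rightarrow> 'a set \<Rightarrow> bool" where
  "agree_on \<xi> \<xi>' S \<longleftrightarrow> (\<forall>A\<in>sets borel. A \<subseteq> S \<longrightarrow> emeasure \<xi> A = emeasure \<xi>' A)"

lemma agree_on_subset: "agree_on \<xi> \<xi>' S \<Longrightarrow> T \<subseteq> S \<Longrightarrow> agree_on \<xi> \<xi>' T"
  unfolding agree_on_def by blast

lemma agree_on_Un:
  assumes sets: "sets \<xi> = sets borel" "sets \<xi>' = sets borel" and S: "S \<in> sets borel"
    and agree: "agree_on \<xi> \<xi>' S" "agree_on \<xi> \<xi>' T"
  shows "agree_on \<xi> \<xi>' (S \<union> T)"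
  unfolding agree_on_def
proof (intro ballI impI)
  fix A assume A: "A \<in> sets borel" "A \<subseteq> S \<union> T"
  have parts: "A \<inter> S \<in> sets borel" "A - S \<in> sets borel" "A \<inter> S \<inter> (A - S) = {}"
    using A S by auto
  have "emeasure \<xi> A = emeasure \<xi> (A \<inter> S) + emeasure \<xi> (A - S)"
    using plus_emeasure[of "A \<inter> S" \<xi> "A - S"] parts sets by (simp add: Int_Diff_Un)
  also have "\<dots> = emeasure \<xi>' (A \<inter> S) + emeasure \<xi>' (A - S)"
    using agree parts A unfolding agree_on_def by (metis Diff_subset_conv Int_lower2 Un_commute)
  also have "\<dots> = emeasure \<xi>' A"
    using plus_emeasure[of "A \<inter> S" \<xi>' "A - S"] parts sets by (simp add: Int_Diff_Un)
  finally show "emeasure \<xi> A = emeasure \<xi>' A" .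
qed

lemma agree_on_null:
  assumes "sets \<xi> = sets borel" "sets \<xi>' = sets borel" "S \<in> sets borel"
    and "emeasure \<xi> S = 0" "emeasure \<xi>' S = 0"
  shows "agree_on \<xi> \<xi>' S"
  unfolding agree_on_def
  using assms emeasure_mono[of _ S \<xi>] emeasure_mono[of _ S \<xi>'] by (metis le_zero_eq)

lemma agree_on_UN_incseq:
  assumes sets: "sets \<xi> = sets borel" "sets \<xi>' = sets borel"
    and "incseq C" and C: "\<And>n. C n \<in> sets borel" and agree: "\<And>n. agree_on \<xi> \<xi>' (C n)"
  shows "agree_on \<xi> \<xi>' (\<Union>n. C n)"
  unfolding agree_on_def
proof (intro ballI impI)
  fix A assume A: "A \<in> sets borel" "A \<subseteq> (\<Union>n. C n)"
  have inc: "incseq (\<lambda>n. A \<inter> C n)" using \<open>incseq C\<close> by (auto simp: incseq_def)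
  have "(\<Union>n. A \<inter> C n) = A" using A by auto
  moreover have "range (\<lambda>n. A \<inter> C n) \<subseteq> sets borel" using A C by auto
  moreover have "emeasure \<xi> (A \<inter> C n) = emeasure \<xi>' (A \<inter> C n)" for n
    using agree[of n] A C unfolding agree_on_def by blast
  ultimately show "emeasure \<xi> A = emeasure \<xi>' A"
    using SUP_emeasure_incseq[OF _ inc, of \<xi>] SUP_emeasure_incseq[OF _ inc, of \<xi>'] sets by simp
qed

lemma agree_on_UNIV_imp_eq:
  assumes "sets \<xi> = sets borel" "sets \<xi>' = sets borel" "agree_on \<xi> \<xi>' UNIV"
  shows "\<xi> = \<xi>'"
  using assms by (intro measure_eqI) (auto simp: agree_on_def)

lemma agree_on_lessThan_limit:
  fixes \<xi> \<xi>' :: "(real \<times> 'k::topological_space) measure"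
  assumes "sets \<xi> = sets borel" "sets \<xi>' = sets borel"
    and agree: "\<And>T. T < S \<Longrightarrow> agree_on \<xi> \<xi>' ({..<T} \<times> UNIV)"
  shows "agree_on \<xi> \<xi>' ({..<S} \<times> UNIV)"
proof -
  define C where "C n = {..<S - 1 / Suc n} \<times> (UNIV :: 'k set)" for n
  have "(\<Union>n. C n) = {..<S} \<times> UNIV"
  proof (intro equalityI subsetI)
    fix x assume "x \<in> {..<S} \<times> (UNIV :: 'k set)"
    then obtain n where "1 / Suc n < S - fst x"
      using nat_approx_posE[of "S - fst x"] by (metis diff_gt_0_iff_gt mem_Sigma_iff
          lessThan_iff prod.collapse)
    then have "x \<in> C n" by (auto simp: C_def mem_Times_iff)
    then show "x \<in> (\<Union>n. C n)" by blast
  qed (auto simp: C_def add_pos_nonneg, smt (verit) divide_pos_pos of_nat_0_le_iff)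
  moreover have "agree_on \<xi> \<xi>' (\<Union>n. C n)"
    using assms by (intro agree_on_UN_incseq)
      (auto simp: C_def incseq_def frac_le order.strict_trans2 intro!: borel_open open_Times)
  ultimately show ?thesis by simp
qed

text \<open>The integer-valued masses of the shrinking intervals \<open>(T, T + 1/(n+1))\<close> are finite and
  decrease to \<open>0\<close>, so one of them is \<open>0\<close>.\<close>

lemma ground_simple_ex_empty_interval_after:
  fixes \<xi> :: "(real \<times> 'k::metric_space) measure"
  assumes gs: "ground_simple \<xi>"
  obtains \<delta> where "\<delta> > 0" "emeasure \<xi> ({T<..<T + \<delta>} \<times> UNIV) = 0"
proof -
  have bf: "bf_counting_measure \<xi>" using gs by (simp add: ground_simple_def)
  hence sets: "sets \<xi> = sets borel" by (simp add: bf_counting_measure_def)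
  define C where "C n = {T<..<T + 1 / Suc n} \<times> (UNIV :: 'k set)" for n
  have C: "C n \<in> sets \<xi>" for n
    unfolding C_def sets by (intro borel_open open_Times) auto
  have "antimono_on UNIV C"
    unfolding C_def monotone_on_def by (auto simp: frac_le order.strict_trans2)
  have "bounded {T<..<T + 1}" using bounded_box box_real(1) by metis
  then have "emeasure \<xi> ({T<..<T + 1} \<times> UNIV) < \<infinity>"
    using gs unfolding ground_simple_def by auto
  moreover have "emeasure \<xi> (C n) \<le> emeasure \<xi> ({T<..<T + 1} \<times> UNIV)" for n
    by (intro emeasure_mono)
      (auto simp: C_def sets divide_le_eq order.strict_trans2 intro!: borel_open open_Times)
  ultimately have fin: "emeasure \<xi> (C n) \<noteq> \<infinity>" for n
    by (metis linorder_not_less top.extremum_uniqueI)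
  have "(\<Inter>n. C n) = {}"
  proof (rule ccontr)
    assume "(\<Inter>n. C n) \<noteq> {}"
    then obtain x y where xy: "\<And>n. (x, y) \<in> C n" by auto
    then obtain n where "1 / Suc n < x - T"
      using nat_approx_posE[of "x - T"] by (metis C_def diff_gt_0_iff_gt greaterThanLessThan_iff
          mem_Sigma_iff of_nat_Suc)
    with xy[of n] show False by (auto simp: C_def)
  qed
  moreover have "range C \<subseteq> sets \<xi>" using C by auto
  ultimately have "(INF n. emeasure \<xi> (C n)) < 1"
    using INF_emeasure_decseq[of C \<xi>] \<open>antimono_on UNIV C\<close> fin by simp
  then obtain n where "emeasure \<xi> (C n) < 1" by (auto simp: INF_less_iff)
  moreover have "emeasure \<xi> (C n) \<in> range (of_nat :: nat \<Rightarrow> ennreal) \<union> {\<infinity>}"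
    using bf C unfolding bf_counting_measure_def sets by blast
  ultimately have "emeasure \<xi> (C n) = 0" using fin[of n] by auto
  then show thesis by (intro that[of "1 / Suc n"]) (auto simp: C_def)
qed

lemma ground_simple_agree_on_right_extension:
  fixes \<xi> \<xi>' :: "(real \<times> 'k::metric_space) measure"
  assumes gs: "ground_simple \<xi>" "ground_simple \<xi>'" and agree: "agree_on \<xi> \<xi>' ({..T} \<times> UNIV)"
  obtains \<delta> where "\<delta> > 0" "agree_on \<xi> \<xi>' ({..<T + \<delta>} \<times> UNIV)"
proof -
  have sets: "sets \<xi> = sets borel" "sets \<xi>' = sets borel"
    using gs by (auto simp: ground_simple_def bf_counting_measure_def)
  obtain \<delta>1 where "\<delta>1 > 0" and null1: "emeasure \<xi> ({T<..<T + \<delta>1} \<times> UNIV) = 0"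
    using ground_simple_ex_empty_interval_after[OF gs(1)] .
  obtain \<delta>2 where "\<delta>2 > 0" and null2: "emeasure \<xi>' ({T<..<T + \<delta>2} \<times> UNIV) = 0"
    using ground_simple_ex_empty_interval_after[OF gs(2)] .
  define \<delta> where "\<delta> = min \<delta>1 \<delta>2"
  let ?I = "{T<..<T + \<delta>} \<times> (UNIV :: 'k set)"
  have I: "?I \<in> sets borel" by (intro borel_open open_Times) auto
  have "emeasure \<xi> ?I \<le> emeasure \<xi> ({T<..<T + \<delta>1} \<times> UNIV)"
    "emeasure \<xi>' ?I \<le> emeasure \<xi>' ({T<..<T + \<delta>2} \<times> UNIV)"
    by (intro emeasure_mono; auto simp: \<delta>_def sets intro!: borel_open open_Times)+
  then have "emeasure \<xi> ?I = 0" "emeasure \<xi>' ?I = 0" using null1 null2 by auto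
  then have "agree_on \<xi> \<xi>' ?I" using agree_on_null sets I by blast
  moreover have "{..<T + \<delta>} \<times> UNIV = {..T} \<times> UNIV \<union> ?I"
    using \<open>\<delta>1 > 0\<close> \<open>\<delta>2 > 0\<close> by (auto simp: \<delta>_def)
  moreover have "{..T} \<times> (UNIV :: 'k set) \<in> sets borel" by (intro borel_closed closed_Times) auto
  ultimately have "agree_on \<xi> \<xi>' ({..<T + \<delta>} \<times> UNIV)"
    using agree_on_Un[OF sets _ agree] by metis
  then show thesis using \<open>\<delta>1 > 0\<close> \<open>\<delta>2 > 0\<close> by (intro that) (auto simp: \<delta>_def)
qed

definition thinning_eq ::
  "(real \<times> ('k \<times> real)) measure \<Rightarrow> ('k \<Rightarrow> (real \<times> 'k) measure \<Rightarrow> ennreal) \<Rightarrow>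
   (real \<times> 'k::metric_space) measure \<Rightarrow> bool" where
  "thinning_eq \<nu> \<psi> \<xi> \<longleftrightarrow> (\<forall>A\<in>sets borel. A \<subseteq> {0<..} \<times> UNIV \<longrightarrow> emeasure \<xi> A =
     emeasure \<nu> {(t, m, z). (t, m) \<in> A \<and> 0 < z \<and> ennreal z \<le> \<psi> m (restr (shift t \<xi>) {..<0})})"

lemma restr_shift_past_eq:
  fixes \<xi> \<xi>' :: "(real \<times> 'k::metric_space) measure"
  assumes sets: "sets \<xi> = sets borel" "sets \<xi>' = sets borel"
    and agree: "agree_on \<xi> \<xi>' ({..<t} \<times> UNIV)"
  shows "restr (shift t \<xi>) {..<0} = restr (shift t \<xi>') {..<0}"
proof -
  let ?g = "\<lambda>(s :: real, u :: 'k). (s - t, u)"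
  let ?S = "{..<(0 :: real)} \<times> (UNIV :: 'k set)"
  have g: "?g \<in> borel \<rightarrow>\<^sub>M borel"
    by (simp add: case_prod_beta' borel_measurable_continuous_onI continuous_intros)
  have S: "?S \<in> sets borel" by (intro borel_open open_Times) auto
  have restr_shift: "emeasure (restr (shift t \<mu>) {..<0}) X = emeasure \<mu> (?g -` (?S \<inter> X))"
    if "sets \<mu> = sets borel" and X: "X \<in> sets borel" for \<mu> :: "(real \<times> 'k) measure" and X
  proof -
    have "?g \<in> \<mu> \<rightarrow>\<^sub>M borel" "space \<mu> = UNIV"
      using g measurable_cong_sets[OF that(1) refl] sets_eq_imp_space_eq[OF that(1)] by auto
    then show ?thesis
      unfolding restr_def shift_def using S X by (simp add: emeasure_restricted emeasure_distr)
  qed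
  show ?thesis
  proof (rule measure_eqI)
    fix X assume "X \<in> sets (restr (shift t \<xi>) {..<0})"
    then have X: "X \<in> sets borel" by (simp add: restr_def shift_def)
    have "?g -` (?S \<inter> X) \<in> sets borel"
      using measurable_sets[OF g] S X by auto
    moreover have "?g -` (?S \<inter> X) \<subseteq> {..<t} \<times> UNIV" by auto
    ultimately show "emeasure (restr (shift t \<xi>) {..<0}) X = emeasure (restr (shift t \<xi>') {..<0}) X"
      using agree restr_shift[OF sets(1) X] restr_shift[OF sets(2) X] by (simp add: agree_on_def)
  qed (simp add: restr_def shift_def)
qed

lemma thinning_eq_agree_on_upto:
  fixes \<xi> \<xi>' :: "(real \<times> 'k::metric_space) measure" and \<psi> :: "'k \<Rightarrow> (real \<times> 'k) measure \<Rightarrow> ennreal"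
  assumes sets: "sets \<xi> = sets borel" "sets \<xi>' = sets borel"
    and "thinning_eq \<nu> \<psi> \<xi>" "thinning_eq \<nu> \<psi> \<xi>'"
    and agree: "agree_on \<xi> \<xi>' ({..<T} \<times> UNIV)"
  shows "agree_on \<xi> \<xi>' ({0<..T} \<times> UNIV)"
  unfolding agree_on_def
proof (intro ballI impI)
  fix A :: "(real \<times> 'k) set" assume A: "A \<in> sets borel" "A \<subseteq> {0<..T} \<times> UNIV"
  have "restr (shift t \<xi>) {..<0} = restr (shift t \<xi>') {..<0}" if "t \<le> T" for t
  proof (rule restr_shift_past_eq[OF sets])
    show "agree_on \<xi> \<xi>' ({..<t} \<times> UNIV)" by (rule agree_on_subset[OF agree]) (use that in auto)
  qed
  then have "{(t, m, z). (t, m) \<in> A \<and> 0 < z \<and> ennreal z \<le> \<psi> m (restr (shift t \<xi>) {..<0})}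
           = {(t, m, z). (t, m) \<in> A \<and> 0 < z \<and> ennreal z \<le> \<psi> m (restr (shift t \<xi>') {..<0})}"
    using A(2) by fastforce
  moreover have "A \<subseteq> {0<..} \<times> UNIV" using A(2) by auto
  ultimately show "emeasure \<xi> A = emeasure \<xi>' A"
    using assms(3,4) A(1) unfolding thinning_eq_def by simp
qed

lemma thinning_eq_unique:
  fixes \<xi> \<xi>' \<zeta> :: "(real \<times> 'k::metric_space) measure"
  assumes gs: "ground_simple \<xi>" "ground_simple \<xi>'"
    and thin: "thinning_eq \<nu> \<psi> \<xi>" "thinning_eq \<nu> \<psi> \<xi>'"
    and init: "\<forall>A\<in>sets borel. emeasure \<xi> (A \<inter> ({..0} \<times> UNIV)) = emeasure \<zeta> A"
      "\<forall>A\<in>sets borel. emeasure \<xi>' (A \<inter> ({..0} \<times> UNIV)) = emeasure \<zeta> A"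
  shows "\<xi> = \<xi>'"
proof -
  have sets: "sets \<xi> = sets borel" "sets \<xi>' = sets borel"
    using gs by (auto simp: ground_simple_def bf_counting_measure_def)
  have past: "agree_on \<xi> \<xi>' ({..0} \<times> UNIV)"
    unfolding agree_on_def using init by (metis Int_absorb2)
  have Z: "{..0::real} \<times> (UNIV :: 'k set) \<in> sets borel" by (intro borel_closed closed_Times) auto
  have upto: "agree_on \<xi> \<xi>' ({..T} \<times> UNIV)" if "agree_on \<xi> \<xi>' ({..<T} \<times> UNIV)" for T
  proof -
    have "{..T} \<times> (UNIV :: 'k set) \<subseteq> {..0} \<times> UNIV \<union> {0<..T} \<times> UNIV" by auto
    then show ?thesis
      using agree_on_Un[OF sets Z past thinning_eq_agree_on_upto[OF sets thin that]]
      by (rule agree_on_subset[rotated])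
  qed
  have "agree_on \<xi> \<xi>' ({..<T} \<times> UNIV)" for T
  proof (induction T rule: real_induct_upwards[where a = 0])
    case (down S T) then show ?case by (elim agree_on_subset) auto
  next
    case base show "agree_on \<xi> \<xi>' ({..<0} \<times> UNIV)" using past by (rule agree_on_subset) auto
  next
    case (limit S) then show ?case using agree_on_lessThan_limit[OF sets] by blast
  next
    case (step T) then show ?case
      using ground_simple_agree_on_right_extension[OF gs upto] by metis
  qed
  then have "agree_on \<xi> \<xi>' (\<Union>n. {..<real n} \<times> UNIV)"
    using sets by (intro agree_on_UN_incseq) (auto simp: incseq_def intro!: borel_open open_Times)
  moreover have "(\<Union>n. {..<real n} \<times> UNIV) = (UNIV :: (real \<times> 'k) set)"
    using reals_Archimedean2 by fastforce
  ultimately show ?thesis using agree_on_UNIV_imp_eq[OF sets] by simp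
qed

theorem theorem2p20:
  fixes P0 :: "'w0 measure" and N0 :: "'w0 \<Rightarrow> (real \<times> 'k::polish_space) measure"
    and P1 :: "'w1 measure" and M1 :: "'w1 \<Rightarrow> (real \<times> ('k \<times> real)) measure"
    and ell :: "'k measure"
    and \<psi> :: "'k \<Rightarrow> (real \<times> 'k) measure \<Rightarrow> ennreal"
    and N N' :: "'w0 \<times> 'w1 \<Rightarrow> (real \<times> 'k) measure"
  assumes "prob_space P0"
    and "nonexpl_mpp P0 N0"
    and "\<forall>\<omega>\<in>space P0. emeasure (N0 \<omega>) ({0<..} \<times> UNIV) = 0"
    and "sets ell = sets borel"
    and "poisson_process P1 M1 (lborel \<Otimes>\<^sub>M (ell \<Otimes>\<^sub>M lborel))"
    and "case_prod \<psi> \<in> measurable (borel \<Otimes>\<^sub>M NS) (borel :: ennreal measure)"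
    and "sde_solution P0 N0 P1 M1 \<psi> N"
    and "sde_solution P0 N0 P1 M1 \<psi> N'"
  shows "AE \<omega> in completion (P0 \<Otimes>\<^sub>M P1). N \<omega> = N' \<omega>"
proof -
  let ?P = "completion (P0 \<Otimes>\<^sub>M P1)"
  have "AE \<omega> in ?P. ground_simple (N \<omega>) \<and> thinning_eq (M1 (snd \<omega>)) \<psi> (N \<omega>) \<and>
    (\<forall>A\<in>sets borel. emeasure (N \<omega>) (A \<inter> ({..0} \<times> UNIV)) = emeasure (N0 (fst \<omega>)) A)"
    if "sde_solution P0 N0 P1 M1 \<psi> N" for N
    using that AE_space[of ?P]
    unfolding sde_solution_def nonexpl_mpp_def thinning_eq_def by (elim conjE) auto
  from this[OF assms(7)] this[OF assms(8)] show ?thesis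
    by eventually_elim (auto intro: thinning_eq_unique)
qed

end
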